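(* Let $P=\{S_1,\ldots,S_n\}$ be a homothetic packing of $n$ squares with contact graph $G=([n],E)$. If $K,K'$ are two distinct cliques of $G$ each of size $4$, then $|K\cap K'|\le 2$.
   Context: Let $S=\{(x,y): -1\le x,y\le 1\}$. A homothetic packing of $n$ squares is a set $P=\{S_1,\ldots,S_n\}$ with $S_i=r_iS+p_i$, $r_i>0$, $p_i\in\mathbb{R}^2$, such that distinct squares have disjoint interiors. Its contact graph is $G=([n],E)$ where $\{i,j\}\in E$ iff $i\ne j$ and $S_i\cap S_j\ne\emptyset$. *)

theory Defs
  imports "HOL-Analysis.Analysis"
begin

definition unit_sq :: "(real \<times> real) set" where
  "unit_sq = {(x, y). -1 \<le> x \<and> x \<le> 1 \<and> -1 \<le> y \<and> y \<le> 1}"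

definition hsq :: "real \<Rightarrow> real \<times> real \<Rightarrow> (real \<times> real) set" where
  "hsq r p = (\<lambda>x. r *\<^sub>R x + p) ` unit_sq"

definition homothetic_packing :: "nat \<Rightarrow> (nat \<Rightarrow> real) \<Rightarrow> (nat \<Rightarrow> real \<times> real) \<Rightarrow> bool" where
  "homothetic_packing n r p \<longleftrightarrow>
     (\<forall>i<n. r i > 0) \<and>
     (\<forall>i<n. \<forall>j<n. i \<noteq> j \<longrightarrow> interior (hsq (r i) (p i)) \<inter> interior (hsq (r j) (p j)) = {})"

definition contact_edge :: "nat \<Rightarrow> (nat \<Rightarrow> real) \<Rightarrow> (nat \<Rightarrow> real \<times> real) \<Rightarrow> nat \<Rightarrow> nat \<Rightarrow> bool" where
  "contact_edge n r p i j \<longleftrightarrow> i < n \<and> j < n \<and> i \<noteq> j \<and> hsq (r i) (p i) \<inter> hsq (r j) (p j) \<noteq> {}"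

definition contact_clique :: "nat \<Rightarrow> (nat \<Rightarrow> real) \<Rightarrow> (nat \<Rightarrow> real \<times> real) \<Rightarrow> nat set \<Rightarrow> bool" where
  "contact_clique n r p K \<longleftrightarrow> K \<subseteq> {..<n} \<and>
     (\<forall>i\<in>K. \<forall>j\<in>K. i \<noteq> j \<longrightarrow> contact_edge n r p i j)"

end

theory Submission
  imports Defs
begin

text \<open>
  A homothetic square is an axis-parallel box, and pairwise intersecting boxes have a common
  point q (Helly's theorem for boxes holds coordinatewise). Two boxes of a packing that both
  contain q touch a hyperplane through q from opposite sides, so at q they occupy distinct
  orthants; in the plane there are only four of them. If four boxes pass through q, then q is
  a corner of each of them. Now let two 4-cliques K and K' share three squares, and let q be a
  common point of K. Two of the three shared squares occupy opposite quadrants at q, so they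
  meet only in q; hence q is also the common point of K', and the at least five squares of
  K \<union> K' all contain q, which is impossible.
\<close>

lemma unit_sq_eq_cbox: "unit_sq = cbox (-1, -1) (1, 1)"
  unfolding unit_sq_def by (auto simp: cbox_Pair_eq)

lemma hsq_eq_cbox:
  assumes "0 \<le> r"
  shows "hsq r p = cbox (p - (r, r)) (p + (r, r))"
proof -
  have "(0, 0) \<in> unit_sq"
    by (simp add: unit_sq_def)
  then have "unit_sq \<noteq> {}"
    by blast
  with assms show ?thesis
    unfolding hsq_def unit_sq_eq_cbox image_affinity_cbox by (cases p) (simp add: add.commute)
qed

lemma Helly_cbox:
  fixes l u :: "'i \<Rightarrow> 'a::euclidean_space"
  assumes "finite I" and "\<forall>i\<in>I. \<forall>j\<in>I. cbox (l i) (u i) \<inter> cbox (l j) (u j) \<noteq> {}"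
  shows "\<exists>q. \<forall>i\<in>I. q \<in> cbox (l i) (u i)"
proof (cases "I = {}")
  case False
  define q where "q = (\<Sum>k\<in>Basis. Max ((\<lambda>i. l i \<bullet> k) ` I) *\<^sub>R k)"
  then have q: "\<forall>k\<in>Basis. Max ((\<lambda>i. l i \<bullet> k) ` I) = q \<bullet> k"
    by (simp only: euclidean_representation_sum')
  have "l j \<bullet> k \<le> u i \<bullet> k" if "i \<in> I" "j \<in> I" and k: "k \<in> Basis" for i j k
  proof -
    have "cbox (l i) (u i) \<inter> cbox (l j) (u j) \<noteq> {}"
      using assms(2) that by simp
    then obtain x where "x \<in> cbox (l i) (u i)" "x \<in> cbox (l j) (u j)"
      by blast
    then have "l j \<bullet> k \<le> x \<bullet> k" "x \<bullet> k \<le> u i \<bullet> k"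
      using k by (simp_all add: mem_box)
    then show ?thesis
      by linarith
  qed
  then have "q \<in> cbox (l i) (u i)" if "i \<in> I" for i
    unfolding mem_box using False assms(1) that by (simp add: q[rule_format, symmetric])
  then show ?thesis
    by blast
qed simp

lemma obtain_three_distinct:
  assumes "3 \<le> card A"
  obtains a b c where "a \<in> A" "b \<in> A" "c \<in> A" "a \<noteq> b" "a \<noteq> c" "b \<noteq> c"
proof -
  obtain T where "T \<subseteq> A" "card T = 3"
    using assms obtain_subset_with_card_n by meson
  then show thesis
    using that by (auto simp: card_3_iff)
qed

lemma complementary_pair_among_three_subsets:
  assumes "card B = 2" and "S1 \<subseteq> B" "S2 \<subseteq> B" "S3 \<subseteq> B"
    and "S1 \<noteq> S2" "S1 \<noteq> S3" "S2 \<noteq> S3"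
  shows "\<exists>S\<in>{S1, S2, S3}. \<exists>T\<in>{S1, S2, S3}. T = B - S"
proof -
  obtain x y where B: "B = {x, y}" "x \<noteq> y"
    using assms(1) card_2_iff by metis
  have "S = {} \<or> S = {x} \<or> S = {y} \<or> S = {x, y}" if "S \<subseteq> B" for S
    using that B(1) by blast
  from this[OF assms(2)] this[OF assms(3)] this[OF assms(4)] show ?thesis
    using assms(5-) B by (elim disjE) (simp_all add: insert_Diff_if)
qed

locale box_packing =
  fixes I :: "'i set" and l u :: "'i \<Rightarrow> 'a::euclidean_space"
  assumes box_nonempty: "i \<in> I \<Longrightarrow> box (l i) (u i) \<noteq> {}"
    and box_disjoint:
      "i \<in> I \<Longrightarrow> j \<in> I \<Longrightarrow> i \<noteq> j \<Longrightarrow> box (l i) (u i) \<inter> box (l j) (u j) = {}"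
begin

lemma lower_less_upper: "i \<in> I \<Longrightarrow> k \<in> Basis \<Longrightarrow> l i \<bullet> k < u i \<bullet> k"
  using box_nonempty box_ne_empty(2) by blast

lemma cbox_nonempty: "i \<in> I \<Longrightarrow> cbox (l i) (u i) \<noteq> {}"
  using box_nonempty box_subset_cbox by blast

lemma obtain_common_point:
  assumes "S \<subseteq> I" "finite S" "pairwise (\<lambda>i j. cbox (l i) (u i) \<inter> cbox (l j) (u j) \<noteq> {}) S"
  obtains q where "\<forall>i\<in>S. q \<in> cbox (l i) (u i)"
proof -
  have "\<forall>i\<in>S. \<forall>j\<in>S. cbox (l i) (u i) \<inter> cbox (l j) (u j) \<noteq> {}"
    using assms(1,3) cbox_nonempty unfolding pairwise_def by (metis Int_absorb subsetD)
  then show thesis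
    using Helly_cbox[OF assms(2)] that by blast
qed

definition opposite_sides :: "'a \<Rightarrow> 'a \<Rightarrow> 'i \<Rightarrow> 'i \<Rightarrow> bool" where
  "opposite_sides q k i j \<longleftrightarrow>
     (q \<bullet> k = u i \<bullet> k \<and> q \<bullet> k = l j \<bullet> k) \<or> (q \<bullet> k = l i \<bullet> k \<and> q \<bullet> k = u j \<bullet> k)"

lemma obtain_opposite_sides:
  assumes "i \<in> I" "j \<in> I" "i \<noteq> j" "q \<in> cbox (l i) (u i)" "q \<in> cbox (l j) (u j)"
  obtains k where "k \<in> Basis" "opposite_sides q k i j"
proof -
  obtain k where k: "k \<in> Basis"
    "u i \<bullet> k \<le> l i \<bullet> k \<or> u j \<bullet> k \<le> l j \<bullet> k \<or> u i \<bullet> k \<le> l j \<bullet> k \<or> u j \<bullet> k \<le> l i \<bullet> k"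
    using box_disjoint[OF assms(1-3)] disjoint_interval(4) by blast
  moreover have "l i \<bullet> k \<le> q \<bullet> k" "q \<bullet> k \<le> u i \<bullet> k"
    "l j \<bullet> k \<le> q \<bullet> k" "q \<bullet> k \<le> u j \<bullet> k"
    using assms(4,5) k(1) by (auto simp: mem_box)
  ultimately have "opposite_sides q k i j"
    using assms(1,2) lower_less_upper[of i k] lower_less_upper[of j k]
    by (auto simp: opposite_sides_def)
  with k(1) show thesis ..
qed

lemma not_opposite_sides_if_opposite_to_same:
  assumes "i \<in> I" "x \<in> I" "y \<in> I" "k \<in> Basis"
    and "opposite_sides q k i x" "opposite_sides q k i y"
  shows "\<not> opposite_sides q k x y"
  using assms lower_less_upper[of i k] lower_less_upper[of x k] lower_less_upper[of y k]
  by (auto simp: opposite_sides_def)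

text \<open>For a box with corner q, the coordinate directions in which it extends from q.\<close>

definition orthant :: "'a \<Rightarrow> 'i \<Rightarrow> 'a set" where
  "orthant q i = {k \<in> Basis. q \<bullet> k = l i \<bullet> k}"

lemma orthant_subset_Basis: "orthant q i \<subseteq> Basis"
  by (auto simp: orthant_def)

lemma orthant_inj_on:
  "inj_on (orthant q) {i \<in> I. q \<in> cbox (l i) (u i)}"
proof (rule inj_onI, rule ccontr)
  fix i j
  assume i: "i \<in> {i \<in> I. q \<in> cbox (l i) (u i)}" and j: "j \<in> {i \<in> I. q \<in> cbox (l i) (u i)}"
    and eq: "orthant q i = orthant q j" and "i \<noteq> j"
  then obtain k where k: "k \<in> Basis" "opposite_sides q k i j"
    using obtain_opposite_sides by blast
  then have "(k \<in> orthant q i) \<noteq> (k \<in> orthant q j)"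
    using i j lower_less_upper[of i k] lower_less_upper[of j k]
    by (auto simp: opposite_sides_def orthant_def)
  with eq show False by simp
qed

lemma card_le_if_common_point:
  assumes "J \<subseteq> I" and "\<forall>j\<in>J. q \<in> cbox (l j) (u j)"
  shows "card J \<le> 2 ^ DIM('a)"
proof -
  have "inj_on (orthant q) J"
    using assms by (blast intro: inj_on_subset[OF orthant_inj_on])
  then have "card J \<le> card (Pow (Basis :: 'a set))"
    by (rule card_inj_on_le) (auto simp: orthant_def)
  then show ?thesis
    by (simp add: card_Pow)
qed

definition is_corner :: "'a \<Rightarrow> 'i \<Rightarrow> bool" where
  "is_corner q i \<longleftrightarrow> (\<forall>k\<in>Basis. q \<bullet> k = l i \<bullet> k \<or> q \<bullet> k = u i \<bullet> k)"

lemma is_corner_if_card_ge_4: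
  assumes "DIM('a) = 2" "J \<subseteq> I" "4 \<le> card J" "i \<in> J" "\<forall>j\<in>J. q \<in> cbox (l j) (u j)"
  shows "is_corner q i"
  unfolding is_corner_def
proof (intro ballI, rule ccontr)
  txt \<open>If q lies strictly inside box i in coordinate k, every other box through q lies across
    from box i in the other coordinate k'. Three such boxes are then all on one side in k', so
    they would have to be pairwise on opposite sides in coordinate k, which is impossible.\<close>
  fix k
  assume k: "k \<in> Basis" and not_endpoint: "\<not> (q \<bullet> k = l i \<bullet> k \<or> q \<bullet> k = u i \<bullet> k)"
  have "card (Basis - {k}) = 1"
    using assms(1) k by simp
  then obtain k' where k': "Basis - {k} = {k'}"
    by (rule card_1_singletonE)
  then have Basis: "Basis = {k, k'}"
    using k by blast
  have sep: "opposite_sides q k x y \<or> opposite_sides q k' x y"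
    if xy: "x \<in> J" "y \<in> J" "x \<noteq> y" for x y
  proof -
    obtain k'' where "k'' \<in> Basis" "opposite_sides q k'' x y"
      using obtain_opposite_sides[of x y q] xy assms(2,5) by blast
    with Basis show ?thesis
      by auto
  qed
  have "finite J"
    using assms(3) by (metis card.infinite not_numeral_le_zero)
  then have "3 \<le> card (J - {i})"
    using assms(3,4) by simp
  then obtain a b c where abc: "a \<in> J - {i}" "b \<in> J - {i}" "c \<in> J - {i}"
    "a \<noteq> b" "a \<noteq> c" "b \<noteq> c"
    by (rule obtain_three_distinct)
  have in_I: "i \<in> I" "a \<in> I" "b \<in> I" "c \<in> I"
    using abc assms(2,4) by auto
  have "k' \<in> Basis"
    using Basis by blast
  have "\<not> opposite_sides q k i x" for x
    using not_endpoint by (auto simp: opposite_sides_def)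
  then have "opposite_sides q k' i a" "opposite_sides q k' i b" "opposite_sides q k' i c"
    using sep abc assms(4) by blast+
  then have "\<not> opposite_sides q k' a b" "\<not> opposite_sides q k' a c"
    "\<not> opposite_sides q k' b c"
    using not_opposite_sides_if_opposite_to_same[OF in_I(1) _ _ \<open>k' \<in> Basis\<close>] in_I
    by blast+
  moreover from this(1,2) have "opposite_sides q k a b" "opposite_sides q k a c"
    using sep abc by blast+
  then have "\<not> opposite_sides q k b c"
    by (rule not_opposite_sides_if_opposite_to_same[OF in_I(2-4) k])
  ultimately show False
    using sep[of b c] abc by blast
qed

lemma cbox_Int_subset_if_complementary_orthants:
  assumes "is_corner q i" "is_corner q j" "orthant q j = Basis - orthant q i"
  shows "cbox (l i) (u i) \<inter> cbox (l j) (u j) \<subseteq> {q}"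
proof
  fix x assume x: "x \<in> cbox (l i) (u i) \<inter> cbox (l j) (u j)"
  have "x \<bullet> k = q \<bullet> k" if k: "k \<in> Basis" for k
  proof -
    have x_k: "l i \<bullet> k \<le> x \<bullet> k" "x \<bullet> k \<le> u i \<bullet> k" "l j \<bullet> k \<le> x \<bullet> k" "x \<bullet> k \<le> u j \<bullet> k"
      using x k by (auto simp: mem_box)
    have corners: "q \<bullet> k = l i \<bullet> k \<or> q \<bullet> k = u i \<bullet> k" "q \<bullet> k = l j \<bullet> k \<or> q \<bullet> k = u j \<bullet> k"
      using assms(1,2) k by (auto simp: is_corner_def)
    show ?thesis
    proof (cases "k \<in> orthant q i")
      case True
      then have "k \<notin> orthant q j"
        using assms(3) by blast
      with True k corners(2) have "q \<bullet> k = l i \<bullet> k" "q \<bullet> k = u j \<bullet> k"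
        by (auto simp: orthant_def)
      with x_k show ?thesis by linarith
    next
      case False
      then have "k \<in> orthant q j"
        using assms(3) k by blast
      with False k corners(1) have "q \<bullet> k = u i \<bullet> k" "q \<bullet> k = l j \<bullet> k"
        by (auto simp: orthant_def)
      with x_k show ?thesis by linarith
    qed
  qed
  then show "x \<in> {q}"
    using euclidean_eqI[of x q] by blast
qed

lemma card_Int_le_2_if_pairwise_meeting:
  assumes "DIM('a) = 2" "J \<subseteq> I" "J' \<subseteq> I" "card J = 4" "card J' = 4" "J \<noteq> J'"
    and "pairwise (\<lambda>i j. cbox (l i) (u i) \<inter> cbox (l j) (u j) \<noteq> {}) J"
    and "pairwise (\<lambda>i j. cbox (l i) (u i) \<inter> cbox (l j) (u j) \<noteq> {}) J'"
  shows "card (J \<inter> J') \<le> 2"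
proof (rule ccontr)
  assume "\<not> ?thesis"
  then have "3 \<le> card (J \<inter> J')"
    by simp
  then obtain a b c where "a \<in> J \<inter> J'" "b \<in> J \<inter> J'" "c \<in> J \<inter> J'"
    and abc: "a \<noteq> b" "a \<noteq> c" "b \<noteq> c"
    by (rule obtain_three_distinct)
  then have shared: "{a, b, c} \<subseteq> J \<inter> J'"
    by blast
  have fin: "finite J" "finite J'"
    using assms(4,5) card.infinite by force+
  obtain q where q: "\<forall>i\<in>J. q \<in> cbox (l i) (u i)"
    using obtain_common_point[OF assms(2) fin(1) assms(7)] .
  obtain q' where q': "\<forall>i\<in>J'. q' \<in> cbox (l i) (u i)"
    using obtain_common_point[OF assms(3) fin(2) assms(8)] .
  have corner: "is_corner q x" if "x \<in> {a, b, c}" for x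
    by (rule is_corner_if_card_ge_4[OF assms(1,2) _ _ q]) (use assms(4) shared that in auto)
  have "{a, b, c} \<subseteq> {i \<in> I. q \<in> cbox (l i) (u i)}"
    using shared assms(2) q by blast
  then have inj: "inj_on (orthant q) {a, b, c}"
    by (rule inj_on_subset[OF orthant_inj_on])
  have "\<exists>S\<in>orthant q ` {a, b, c}. \<exists>T\<in>orthant q ` {a, b, c}. T = Basis - S"
    using complementary_pair_among_three_subsets[OF _ orthant_subset_Basis orthant_subset_Basis
        orthant_subset_Basis, of q a q b q c] inj_on_contraD[OF inj] abc assms(1)
    by simp
  then obtain x y where xy: "x \<in> {a, b, c}" "y \<in> {a, b, c}" "orthant q y = Basis - orthant q x"
    by blast
  have "q' \<in> cbox (l x) (u x) \<inter> cbox (l y) (u y)"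
    using q' xy shared by auto
  then have "q' = q"
    using cbox_Int_subset_if_complementary_orthants[OF corner corner] xy by blast
  then have "card (J \<union> J') \<le> 2 ^ DIM('a)"
    by (intro card_le_if_common_point) (use assms(2,3) q q' in auto)
  moreover have "J \<subset> J \<union> J'"
    using card_subset_eq[OF fin(1), of J'] assms(4-6) by auto
  then have "card J < card (J \<union> J')"
    using fin by (simp add: psubset_card_mono)
  ultimately show False
    using assms(1,4) by simp
qed

end

lemma box_packing_squares:
  assumes "homothetic_packing n r p"
  shows "box_packing {..<n} (\<lambda>i. p i - (r i, r i)) (\<lambda>i. p i + (r i, r i))"
proof
  fix i j assume i: "i \<in> {..<n}"
  then have "0 < r i"
    using assms by (simp add: homothetic_packing_def)
  then show "box (p i - (r i, r i)) (p i + (r i, r i)) \<noteq> {}"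
    by (cases "p i") (simp add: box_ne_empty Basis_prod_def inner_simps)
  assume j: "j \<in> {..<n}" and "i \<noteq> j"
  with i assms have "interior (hsq (r i) (p i)) \<inter> interior (hsq (r j) (p j)) = {}" "0 < r j"
    by (simp_all add: homothetic_packing_def)
  with \<open>0 < r i\<close> show
    "box (p i - (r i, r i)) (p i + (r i, r i)) \<inter> box (p j - (r j, r j)) (p j + (r j, r j)) = {}"
    by (simp add: hsq_eq_cbox)
qed

lemma pairwise_cbox_Int_if_contact_clique:
  assumes "homothetic_packing n r p" "contact_clique n r p K"
  shows "pairwise (\<lambda>i j.
    cbox (p i - (r i, r i)) (p i + (r i, r i)) \<inter> cbox (p j - (r j, r j)) (p j + (r j, r j)) \<noteq> {}) K"
  unfolding pairwise_def
proof (intro ballI impI)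
  fix i j assume "i \<in> K" "j \<in> K" "i \<noteq> j"
  then have "i < n" "j < n" "hsq (r i) (p i) \<inter> hsq (r j) (p j) \<noteq> {}"
    using assms(2) by (auto simp: contact_clique_def contact_edge_def)
  moreover from this(1,2) have "0 < r i" "0 < r j"
    using assms(1) by (simp_all add: homothetic_packing_def)
  ultimately show
    "cbox (p i - (r i, r i)) (p i + (r i, r i)) \<inter> cbox (p j - (r j, r j)) (p j + (r j, r j)) \<noteq> {}"
    by (simp add: hsq_eq_cbox)
qed

theorem lemma10:
  fixes n :: nat and r :: "nat \<Rightarrow> real" and p :: "nat \<Rightarrow> real \<times> real"
    and K K' :: "nat set"
  assumes "homothetic_packing n r p"
    and "contact_clique n r p K" and "card K = 4"
    and "contact_clique n r p K'" and "card K' = 4"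
    and "K \<noteq> K'"
  shows "card (K \<inter> K') \<le> 2"
proof -
  interpret box_packing "{..<n}" "\<lambda>i. p i - (r i, r i)" "\<lambda>i. p i + (r i, r i)"
    using assms(1) by (rule box_packing_squares)
  show ?thesis
  proof (rule card_Int_le_2_if_pairwise_meeting)
    show "K \<subseteq> {..<n}" "K' \<subseteq> {..<n}"
      using assms(2,4) by (auto simp: contact_clique_def)
  qed (use assms pairwise_cbox_Int_if_contact_clique in auto)
qed

end
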